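(* Let $y$ be a real random variable with density $f$, let $y_1,\dots,y_n$ be i.i.d. copies with $n=Hc$ and order statistics $y_{(1)}\le\dots\le y_{(n)}$. Define the random intervals $S_1=(-\infty,y_{(c)}]$, $S_h=(y_{((h-1)c)},y_{(hc)}]$ for $2\le h\le H-1$, $S_H=(y_{((H-1)c)},\infty)$, and $\delta_h=\int_{S_h}f(u)\,du$. Let $E(\epsilon)=\{\omega: |\delta_h-\frac1H|>\epsilon\text{ for some }h\}$. There exists a positive constant $C$ such that for any $\epsilon>\frac4{Hc-1}$, \[P(E(\epsilon))\le CH^2\sqrt{Hc+1}\exp\Big(-(Hc+1)\frac{\epsilon^2}{32}\Big)\] for sufficiently large $H$ and $c$. *)

theory Defs
  imports "HOL-Probability.Probability"
begin

definition order_stat :: "(nat \<Rightarrow> 'a \<Rightarrow> real) \<Rightarrow> nat \<Rightarrow> nat \<Rightarrow> 'a \<Rightarrow> real" where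
  "order_stat Y n k w = sort (map (\<lambda>i. Y i w) [1..<n+1]) ! (k - 1)"

definition slice :: "(nat \<Rightarrow> 'a \<Rightarrow> real) \<Rightarrow> nat \<Rightarrow> nat \<Rightarrow> nat \<Rightarrow> 'a \<Rightarrow> real set" where
  "slice Y H c h w =
     (if h = 1 then {..order_stat Y (H*c) c w}
      else if h = H then {order_stat Y (H*c) ((H-1)*c) w<..}
      else {order_stat Y (H*c) ((h-1)*c) w<..order_stat Y (H*c) (h*c) w})"

definition slice_mass :: "(real \<Rightarrow> real) \<Rightarrow> (nat \<Rightarrow> 'a \<Rightarrow> real) \<Rightarrow> nat \<Rightarrow> nat \<Rightarrow> nat \<Rightarrow> 'a \<Rightarrow> real" where
  "slice_mass f Y H c h w = (LINT u:slice Y H c h w|lborel. f u)"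

definition bad_event :: "'a measure \<Rightarrow> (real \<Rightarrow> real) \<Rightarrow> (nat \<Rightarrow> 'a \<Rightarrow> real) \<Rightarrow> nat \<Rightarrow> nat \<Rightarrow> real \<Rightarrow> 'a set" where
  "bad_event M f Y H c \<epsilon> =
     {w \<in> space M. \<exists>h\<in>{1..H}. \<bar>slice_mass f Y H c h w - 1 / real H\<bar> > \<epsilon>}"

end

theory Submission
  imports Defs
begin

text \<open>
  Let \<open>F\<close> be the distribution function of \<open>f\<close>; it is continuous, so every value in \<open>(0,1)\<close>
  is attained.  If \<open>F(y_(m)) > m/n + t\<close>, then fewer than \<open>m\<close> sample points lie below the point
  \<open>q\<close> with \<open>F(q) = m/n + t\<close>, although \<open>n F(q) = m + n t\<close> of them are expected there; by
  Hoeffding's inequality this has probability at most \<open>exp(-2 n t\<^sup>2)\<close>, and symmetrically for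
  \<open>F(y_(m)) < m/n - t\<close>.  The slice masses \<open>\<delta>\<^sub>h\<close> are differences of consecutive values
  \<open>F(y_(k c))\<close>, so with \<open>t = \<epsilon>/2\<close> a union bound over the \<open>H - 1\<close> cut points gives
  \<open>P(E(\<epsilon>)) \<le> 2 (H - 1) exp(-n \<epsilon>\<^sup>2/2)\<close>, which is below the claimed bound with \<open>C = 2\<close>.
\<close>

lemma sorted_nth_le_iff_length_filter:
  fixes xs :: "'a::linorder list"
  assumes "sorted xs" "m < length xs"
  shows "xs ! m \<le> q \<longleftrightarrow> m < length (filter (\<lambda>x. x \<le> q) xs)"
proof
  assume le: "xs ! m \<le> q"
  have "\<forall>x\<in>set (take (Suc m) xs). x \<le> q"
  proof
    fix x assume "x \<in> set (take (Suc m) xs)"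
    then obtain i where "i < Suc m" "x = xs ! i" by (auto simp: in_set_conv_nth)
    then show "x \<le> q" using sorted_nth_mono[OF assms(1), of i m] assms(2) le by simp
  qed
  then have "length (filter (\<lambda>x. x \<le> q) (take (Suc m) xs)) = Suc m"
    using assms by simp
  moreover have "length (filter (\<lambda>x. x \<le> q) (take (Suc m) xs)) \<le> length (filter (\<lambda>x. x \<le> q) xs)"
    by (metis append_take_drop_id filter_append length_append le_add1)
  ultimately show "m < length (filter (\<lambda>x. x \<le> q) xs)" by simp
next
  assume m: "m < length (filter (\<lambda>x. x \<le> q) xs)"
  show "xs ! m \<le> q"
  proof (rule ccontr)
    assume "\<not> xs ! m \<le> q"
    then have "\<forall>x\<in>set (drop m xs). \<not> x \<le> q"
    proof (intro ballI notI)
      fix x assume "x \<in> set (drop m xs)" "x \<le> q"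
      then obtain i where "i < length xs - m" "x = xs ! (m + i)" by (auto simp: in_set_conv_nth)
      then have "xs ! m \<le> x" using sorted_nth_mono[OF assms(1), of m "m + i"] by simp
      then show False using \<open>x \<le> q\<close> \<open>\<not> xs ! m \<le> q\<close> by (meson order_trans)
    qed
    then have "filter (\<lambda>x. x \<le> q) xs = filter (\<lambda>x. x \<le> q) (take m xs)"
      by (metis append_Nil2 append_take_drop_id filter_False filter_append)
    then show False using m length_filter_le[of "\<lambda>x. x \<le> q" "take m xs"] by simp
  qed
qed

lemma order_stat_le_iff_card:
  assumes "1 \<le> m" "m \<le> n"
  shows "order_stat Y n m w \<le> q \<longleftrightarrow> m \<le> card {i\<in>{1..n}. Y i w \<le> q}"
proof -
  define xs where "xs = map (\<lambda>i. Y i w) [1..<n+1]"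
  have "length (filter (\<lambda>x. x \<le> q) (sort xs)) = card {i\<in>{1..n}. Y i w \<le> q}"
    by (simp add: xs_def filter_sort filter_map distinct_length_filter) (auto intro!: arg_cong[where f=card])
  moreover have "order_stat Y n m w \<le> q \<longleftrightarrow> m - 1 < length (filter (\<lambda>x. x \<le> q) (sort xs))"
    unfolding order_stat_def xs_def[symmetric]
    by (rule sorted_nth_le_iff_length_filter) (use assms in \<open>simp_all add: xs_def\<close>)
  ultimately show ?thesis using assms(1) by linarith
qed

lemma order_stat_mono:
  assumes "1 \<le> k" "k \<le> l" "l \<le> n"
  shows "order_stat Y n k w \<le> order_stat Y n l w"
  unfolding order_stat_def by (rule sorted_nth_mono) (use assms in auto)

lemma real_card_eq_sum_if: "finite A \<Longrightarrow> real (card {i\<in>A. P i}) = (\<Sum>i\<in>A. if P i then 1 else 0)"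
  by (simp add: sum.If_cases Int_def conj_commute)

lemma measure_density_eq_set_integral:
  assumes "f \<in> borel_measurable M" "\<And>x. 0 \<le> f x" "A \<in> sets M"
  shows "measure (density M (\<lambda>x. ennreal (f x))) A = (LINT x:A|M. f x)"
proof -
  have "measure (density M (\<lambda>x. ennreal (f x))) A = enn2real (\<integral>\<^sup>+ x. ennreal (f x) * indicator A x \<partial>M)"
    unfolding measure_def using assms by (simp add: emeasure_density)
  also have "\<dots> = (LINT x:A|M. f x)"
    unfolding set_lebesgue_integral_def using assms
    by (subst integral_eq_nn_integral) (auto intro!: arg_cong[where f=enn2real] nn_integral_cong simp: indicator_def)
  finally show ?thesis .
qed

context real_distribution
begin

lemma ex_cdf_eq:
  assumes atomless: "\<And>x. measure M {x} = 0" and "0 < a" "a < 1"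
  shows "\<exists>q. cdf M q = a"
proof -
  obtain x0 where x0: "cdf M x0 < a"
    using eventually_happens'[OF _ order_tendstoD(2)[OF cdf_lim_at_bot \<open>0 < a\<close>]] by auto
  obtain x1 where x1: "x0 \<le> x1" "a < cdf M x1"
    using eventually_happens'[OF _ eventually_conj[OF eventually_ge_at_top[of x0]
        order_tendstoD(1)[OF cdf_lim_at_top_prob \<open>a < 1\<close>]]] by auto
  have "continuous_on {x0..x1} (cdf M)"
    using atomless isCont_cdf by (intro continuous_at_imp_continuous_on) auto
  then show ?thesis using IVT'[of "cdf M" x0 a x1] x0 x1 by auto
qed

lemma measure_Ioi: "measure M {a<..} = 1 - cdf M a"
proof -
  have "{a<..} = space M - {..a}" by auto
  then show ?thesis using prob_compl[of "{..a}"] by (simp add: cdf_def)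
qed

lemma measure_Ioc: "a \<le> b \<Longrightarrow> measure M {a<..b} = cdf M b - cdf M a"
  using cdf_diff_eq[of a b] by (cases "a = b") auto

lemma slice_measure_deviation:
  assumes "2 \<le> H" "1 \<le> c" "h \<in> {1..H}"
    and quantiles: "\<And>k. k \<in> {1..H-1} \<Longrightarrow> \<bar>cdf M (order_stat Y (H*c) (k*c) w) - k / H\<bar> \<le> t"
  shows "\<bar>measure M (slice Y H c h w) - 1 / H\<bar> \<le> 2 * t"
proof -
  have one: "1 \<in> {1..H-1}" using assms(1) by simp
  then have "0 \<le> t" using quantiles[of 1] by (meson abs_ge_zero order_trans)
  consider "h = 1" | "h = H" | "1 < h" "h < H" using assms(3) by (auto simp: order.order_iff_strict)
  then show ?thesis
  proof cases
    case 1
    then show ?thesis using quantiles[OF one] \<open>0 \<le> t\<close> by (simp add: slice_def cdf_def)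
  next
    case 2
    have "real (H - 1) / H = 1 - 1 / H" using assms(1) by (simp add: field_simps of_nat_diff)
    moreover have "H - 1 \<in> {1..H-1}" using assms(1) by simp
    ultimately show ?thesis using 2 quantiles[of "H - 1"] assms(1) \<open>0 \<le> t\<close>
      by (simp add: slice_def measure_Ioi abs_le_iff)
  next
    case 3
    have "order_stat Y (H*c) ((h-1)*c) w \<le> order_stat Y (H*c) (h*c) w"
      using 3 assms(2) by (intro order_stat_mono) (auto intro: mult_le_mono1 simp: Suc_le_eq)
    moreover have "real (h - 1) / H = h / H - 1 / H" using 3 by (simp add: field_simps of_nat_diff)
    moreover have "h \<in> {1..H-1}" "h - 1 \<in> {1..H-1}" using 3 by auto
    ultimately show ?thesis using 3 quantiles[of h] quantiles[of "h - 1"]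
      by (simp add: slice_def measure_Ioc abs_le_iff)
  qed
qed

lemma ex_cut_point_deviation:
  assumes "2 \<le> H" "1 \<le> c" "h \<in> {1..H}" and "\<epsilon> < \<bar>measure M (slice Y H c h w) - 1 / H\<bar>"
  shows "\<exists>k\<in>{1..H-1}. \<epsilon> / 2 < \<bar>cdf M (order_stat Y (H*c) (k*c) w) - real (k*c) / real (H*c)\<bar>"
proof (rule ccontr)
  assume "\<not> ?thesis"
  moreover have "real (k*c) / real (H*c) = k / H" for k using assms(2) by simp
  ultimately have "\<bar>cdf M (order_stat Y (H*c) (k*c) w) - k / H\<bar> \<le> \<epsilon> / 2" if "k \<in> {1..H-1}" for k
    using that by (simp add: not_less)
  from slice_measure_deviation[OF assms(1-3) this] show False using assms(4) by simp
qed

end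

lemma (in prob_space) prob_le_card_mult_of_covers:
  assumes "finite K" and covers: "\<And>k. k \<in> K \<Longrightarrow> \<exists>S\<in>events. A k \<subseteq> S \<and> prob S \<le> b"
    and "B \<subseteq> (\<Union>k\<in>K. A k)"
  shows "prob B \<le> real (card K) * b"
proof -
  have "\<forall>k\<in>K. \<exists>S. S \<in> events \<and> A k \<subseteq> S \<and> prob S \<le> b" using covers by blast
  then have "\<exists>S. \<forall>k\<in>K. S k \<in> events \<and> A k \<subseteq> S k \<and> prob (S k) \<le> b" by (rule bchoice)
  then obtain S where S: "\<forall>k\<in>K. S k \<in> events \<and> A k \<subseteq> S k \<and> prob (S k) \<le> b" ..
  have "B \<subseteq> (\<Union>k\<in>K. S k)" using assms(3) S by blast
  moreover have "(\<Union>k\<in>K. S k) \<in> events" using assms(1) S by (intro sets.finite_UN) auto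
  ultimately have "prob B \<le> prob (\<Union>k\<in>K. S k)" by (rule finite_measure_mono)
  also have "\<dots> \<le> (\<Sum>k\<in>K. prob (S k))"
    using assms(1) S by (intro finite_measure_subadditive_finite) auto
  also have "\<dots> \<le> (\<Sum>k\<in>K. b)" using S by (intro sum_mono) blast
  finally show ?thesis by simp
qed

locale iid_real_sample = prob_space M for M :: "'a measure" +
  fixes D :: "real measure" and Y :: "nat \<Rightarrow> 'a \<Rightarrow> real" and n :: nat
  assumes indep_Y: "indep_vars (\<lambda>_. borel) Y {1..n}"
    and distr_Y: "\<And>i. i \<in> {1..n} \<Longrightarrow> distr M borel (Y i) = D"
    and sample_size_pos: "0 < n"
begin

lemma random_variable_Y [measurable]: "i \<in> {1..n} \<Longrightarrow> random_variable borel (Y i)"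
  using indep_Y by (auto simp: indep_vars_def)

sublocale D: real_distribution D
proof -
  have "1 \<in> {1..n}" using sample_size_pos by simp
  then show "real_distribution D" using distr_Y random_variable_Y real_distribution_distr by metis
qed

lemma prob_Y_le: "i \<in> {1..n} \<Longrightarrow> prob {w\<in>space M. Y i w \<le> q} = cdf D q"
  using measure_distr[OF random_variable_Y, of i "{..q}"] distr_Y[of i]
  by (simp add: cdf_def vimage_def Int_def conj_commute)

lemma borel_measurable_count [measurable]:
  "(\<lambda>w. real (card {i\<in>{1..n}. Y i w \<le> q})) \<in> borel_measurable M"
  by (simp add: real_card_eq_sum_if)

lemma
  assumes "0 \<le> t"
  shows prob_count_ge: "prob {w\<in>space M. n * cdf D q + t \<le> real (card {i\<in>{1..n}. Y i w \<le> q})} \<le> exp (-2 * t\<^sup>2 / n)"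
    and prob_count_le: "prob {w\<in>space M. real (card {i\<in>{1..n}. Y i w \<le> q}) \<le> n * cdf D q - t} \<le> exp (-2 * t\<^sup>2 / n)"
proof -
  define X where "X i w = (if Y i w \<le> q then 1 else 0 :: real)" for i w
  have indep_X: "indep_vars (\<lambda>_. borel) X {1..n}"
    unfolding X_def by (rule indep_vars_compose2[OF indep_Y]) measurable
  have "expectation (X i) = cdf D q" if "i \<in> {1..n}" for i
  proof -
    have "expectation (X i) = prob {w\<in>space M. Y i w \<le> q}"
      by (subst Bochner_Integration.integral_cong[where g="indicator {w\<in>space M. Y i w \<le> q}"])
         (auto simp: X_def Int_absorb2)
    then show ?thesis using prob_Y_le[OF that] by simp
  qed
  then have mean: "(\<Sum>i\<in>{1..n}. expectation (X i)) = n * cdf D q" by simp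
  interpret Hoeffding_ineq M "{1..n}" X "\<lambda>_. 0" "\<lambda>_. 1" "\<Sum>i\<in>{1..n}. expectation (X i)"
    by unfold_locales (use indep_X in \<open>auto simp: X_def\<close>)
  have sum_X: "(\<Sum>i\<in>{1..n}. X i w) = real (card {i\<in>{1..n}. Y i w \<le> q})" for w
    unfolding X_def by (rule real_card_eq_sum_if[symmetric]) simp
  have spread: "(\<Sum>i\<in>{1..n}. (1 - 0 :: real)\<^sup>2) = n" by simp
  then have pos: "(\<Sum>i\<in>{1..n}. (1 - 0 :: real)\<^sup>2) > 0"
    using sample_size_pos by simp
  show "prob {w\<in>space M. n * cdf D q + t \<le> real (card {i\<in>{1..n}. Y i w \<le> q})} \<le> exp (-2 * t\<^sup>2 / n)"
    using Hoeffding_ineq_ge[OF assms pos] unfolding sum_X mean spread .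
  show "prob {w\<in>space M. real (card {i\<in>{1..n}. Y i w \<le> q}) \<le> n * cdf D q - t} \<le> exp (-2 * t\<^sup>2 / n)"
    using Hoeffding_ineq_le[OF assms pos] unfolding sum_X mean spread .
qed

context
  assumes atomless: "\<And>x. measure D {x} = 0"
begin

text \<open>Measurability of the order statistics is avoided: each deviation event is covered by a
  Hoeffding event for the number of sample points below a suitable quantile.\<close>

lemma order_stat_cdf_upper_tail:
  fixes t :: real
  assumes "1 \<le> m" "m \<le> n" "0 < t"
  shows "\<exists>S\<in>events. {w\<in>space M. m / n + t < cdf D (order_stat Y n m w)} \<subseteq> S
           \<and> prob S \<le> exp (- 2 * real n * t\<^sup>2)"
proof (cases "m / n + t < 1")
  case False
  then have "cdf D x \<le> m / n + t" for x using D.cdf_bounded_prob[of x] by linarith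
  then show ?thesis by (intro bexI[of _ "{}"]) (auto simp: not_less)
next
  case True
  moreover have "0 < m / n + t" using assms by (simp add: add_pos_pos)
  ultimately obtain q where q: "cdf D q = m / n + t" using D.ex_cdf_eq atomless by blast
  have m_eq: "n * cdf D q - n * t = m" using q sample_size_pos by (simp add: field_simps)
  define S where "S = {w\<in>space M. real (card {i\<in>{1..n}. Y i w \<le> q}) \<le> n * cdf D q - n * t}"
  have "{w\<in>space M. m / n + t < cdf D (order_stat Y n m w)} \<subseteq> S"
  proof safe
    fix w assume w: "w \<in> space M" "m / n + t < cdf D (order_stat Y n m w)"
    have "\<not> order_stat Y n m w \<le> q"
    proof
      assume "order_stat Y n m w \<le> q"
      then have "cdf D (order_stat Y n m w) \<le> cdf D q" by (rule D.cdf_nondecreasing)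
      then show False using w(2) q by simp
    qed
    then have "card {i\<in>{1..n}. Y i w \<le> q} < m"
      using order_stat_le_iff_card[OF assms(1,2), of Y w q] by simp
    then show "w \<in> S" using \<open>w \<in> space M\<close> by (simp add: S_def m_eq)
  qed
  moreover have "prob S \<le> exp (- 2 * real n * t\<^sup>2)"
  proof -
    have "prob S \<le> exp (-2 * (real n * t)\<^sup>2 / real n)"
      unfolding S_def using assms(3) by (intro prob_count_le) simp
    also have "\<dots> = exp (- 2 * real n * t\<^sup>2)"
      using sample_size_pos by (simp add: power2_eq_square)
    finally show ?thesis .
  qed
  moreover have "S \<in> events" unfolding S_def by measurable
  ultimately show ?thesis by blast
qed

lemma order_stat_cdf_lower_tail:
  fixes t :: real
  assumes "1 \<le> m" "m \<le> n" "0 < t"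
  shows "\<exists>S\<in>events. {w\<in>space M. cdf D (order_stat Y n m w) < m / n - t} \<subseteq> S
           \<and> prob S \<le> exp (- 2 * real n * t\<^sup>2)"
proof (cases "0 < m / n - t")
  case False
  then have "m / n - t \<le> cdf D x" for x using D.cdf_nonneg[of x] by linarith
  then show ?thesis by (intro bexI[of _ "{}"]) (auto simp: not_less)
next
  case True
  moreover have "m / n - t < 1"
  proof -
    have "real m / n \<le> 1" using assms by simp
    then show ?thesis using assms(3) by linarith
  qed
  ultimately obtain q where q: "cdf D q = m / n - t" using D.ex_cdf_eq atomless by blast
  have m_eq: "n * cdf D q + n * t = m" using q sample_size_pos by (simp add: field_simps)
  define S where "S = {w\<in>space M. n * cdf D q + n * t \<le> real (card {i\<in>{1..n}. Y i w \<le> q})}"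
  have "{w\<in>space M. cdf D (order_stat Y n m w) < m / n - t} \<subseteq> S"
  proof safe
    fix w assume w: "w \<in> space M" "cdf D (order_stat Y n m w) < m / n - t"
    have "order_stat Y n m w \<le> q"
    proof (rule ccontr)
      assume "\<not> order_stat Y n m w \<le> q"
      then have "cdf D q \<le> cdf D (order_stat Y n m w)" by (intro D.cdf_nondecreasing) simp
      then show False using w(2) q by simp
    qed
    then have "m \<le> card {i\<in>{1..n}. Y i w \<le> q}" using order_stat_le_iff_card[OF assms(1,2), of Y w q] by simp
    then show "w \<in> S" using \<open>w \<in> space M\<close> by (simp add: S_def m_eq)
  qed
  moreover have "prob S \<le> exp (- 2 * real n * t\<^sup>2)"
  proof -
    have "prob S \<le> exp (-2 * (real n * t)\<^sup>2 / real n)"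
      unfolding S_def using assms(3) by (intro prob_count_ge) simp
    also have "\<dots> = exp (- 2 * real n * t\<^sup>2)"
      using sample_size_pos by (simp add: power2_eq_square)
    finally show ?thesis .
  qed
  moreover have "S \<in> events" unfolding S_def by measurable
  ultimately show ?thesis by blast
qed

lemma order_stat_cdf_deviation:
  fixes t :: real
  assumes "1 \<le> m" "m \<le> n" "0 < t"
  shows "\<exists>S\<in>events. {w\<in>space M. t < \<bar>cdf D (order_stat Y n m w) - m / n\<bar>} \<subseteq> S
           \<and> prob S \<le> 2 * exp (- 2 * real n * t\<^sup>2)"
proof -
  obtain S1 where S1: "S1 \<in> events" "{w\<in>space M. m / n + t < cdf D (order_stat Y n m w)} \<subseteq> S1"
      "prob S1 \<le> exp (- 2 * real n * t\<^sup>2)"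
    using order_stat_cdf_upper_tail[OF assms] by blast
  obtain S2 where S2: "S2 \<in> events" "{w\<in>space M. cdf D (order_stat Y n m w) < m / n - t} \<subseteq> S2"
      "prob S2 \<le> exp (- 2 * real n * t\<^sup>2)"
    using order_stat_cdf_lower_tail[OF assms] by blast
  have "{w\<in>space M. t < \<bar>cdf D (order_stat Y n m w) - m / n\<bar>} \<subseteq> S1 \<union> S2"
  proof
    fix w assume "w \<in> {w\<in>space M. t < \<bar>cdf D (order_stat Y n m w) - m / n\<bar>}"
    then have "w \<in> space M" and "t < \<bar>cdf D (order_stat Y n m w) - m / n\<bar>" by auto
    moreover have "\<And>x a :: real. t < \<bar>x - a\<bar> \<Longrightarrow> a + t < x \<or> x < a - t" by arith
    ultimately have "m / n + t < cdf D (order_stat Y n m w) \<or> cdf D (order_stat Y n m w) < m / n - t"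
      by blast
    then show "w \<in> S1 \<union> S2" using S1(2) S2(2) \<open>w \<in> space M\<close> by blast
  qed
  moreover have "prob (S1 \<union> S2) \<le> 2 * exp (- 2 * real n * t\<^sup>2)"
    using measure_Un_le[OF S1(1) S2(1)] S1(3) S2(3) by linarith
  ultimately show ?thesis using S1(1) S2(1) by blast
qed

lemma prob_slice_deviation_le:
  fixes \<epsilon> :: real
  assumes n: "n = H * c" and "2 \<le> H" "1 \<le> c" "0 < \<epsilon>"
  shows "prob {w\<in>space M. \<exists>h\<in>{1..H}. \<epsilon> < \<bar>measure D (slice Y H c h w) - 1 / H\<bar>}
           \<le> 2 * real (H - 1) * exp (- real n * \<epsilon>\<^sup>2 / 2)"
proof -
  have "prob {w\<in>space M. \<exists>h\<in>{1..H}. \<epsilon> < \<bar>measure D (slice Y H c h w) - 1 / H\<bar>}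
      \<le> real (card {1..H-1}) * (2 * exp (- 2 * real n * (\<epsilon> / 2)\<^sup>2))"
  proof (rule prob_le_card_mult_of_covers[where
        A = "\<lambda>k. {w\<in>space M. \<epsilon> / 2 < \<bar>cdf D (order_stat Y n (k * c) w) - real (k * c) / n\<bar>}"])
    fix k assume k: "k \<in> {1..H-1}"
    have "1 \<le> k * c" using k assms(3) by simp
    moreover have "k * c \<le> n" using k unfolding n by (intro mult_le_mono1) auto
    ultimately show "\<exists>S\<in>events.
        {w\<in>space M. \<epsilon> / 2 < \<bar>cdf D (order_stat Y n (k * c) w) - real (k * c) / n\<bar>} \<subseteq> S
        \<and> prob S \<le> 2 * exp (- 2 * real n * (\<epsilon> / 2)\<^sup>2)"
      by (rule order_stat_cdf_deviation) (use \<open>0 < \<epsilon>\<close> in simp)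
  next
    show "{w\<in>space M. \<exists>h\<in>{1..H}. \<epsilon> < \<bar>measure D (slice Y H c h w) - 1 / H\<bar>}
      \<subseteq> (\<Union>k\<in>{1..H-1}. {w\<in>space M. \<epsilon> / 2 < \<bar>cdf D (order_stat Y n (k * c) w) - real (k * c) / n\<bar>})"
    proof
      fix w assume "w \<in> {w\<in>space M. \<exists>h\<in>{1..H}. \<epsilon> < \<bar>measure D (slice Y H c h w) - 1 / H\<bar>}"
      then obtain h where w: "w \<in> space M" and h: "h \<in> {1..H}"
        and deviates: "\<epsilon> < \<bar>measure D (slice Y H c h w) - 1 / H\<bar>" by blast
      obtain k where "k \<in> {1..H-1}"
        and "\<epsilon> / 2 < \<bar>cdf D (order_stat Y n (k * c) w) - real (k * c) / n\<bar>"
        using D.ex_cut_point_deviation[OF assms(2,3) h deviates, folded n] ..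
      then show "w \<in> (\<Union>k\<in>{1..H-1}. {w\<in>space M. \<epsilon> / 2 < \<bar>cdf D (order_stat Y n (k * c) w) - real (k * c) / n\<bar>})"
        using w by blast
    qed
  qed simp
  also have "\<dots> = 2 * real (H - 1) * exp (- real n * \<epsilon>\<^sup>2 / 2)"
    by (simp add: power_divide)
  finally show ?thesis .
qed

end

end

lemma union_bound_le_sqrt_bound:
  fixes \<epsilon> :: real and H n :: nat
  assumes "1 \<le> n"
  shows "2 * real (H - 1) * exp (- real n * \<epsilon>\<^sup>2 / 2)
           \<le> 2 * real H ^ 2 * sqrt (real n + 1) * exp (- (real n + 1) * \<epsilon>\<^sup>2 / 32)"
proof -
  have "H - 1 \<le> H\<^sup>2" by (simp add: power2_eq_square) (meson diff_le_self le_square order_trans)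
  then have "real (H - 1) \<le> real H ^ 2" by (metis of_nat_le_iff of_nat_power)
  also have "\<dots> \<le> real H ^ 2 * sqrt (real n + 1)" by (simp add: mult_le_cancel_left1)
  finally have "2 * real (H - 1) \<le> 2 * real H ^ 2 * sqrt (real n + 1)" by simp
  moreover have "exp (- real n * \<epsilon>\<^sup>2 / 2) \<le> exp (- (real n + 1) * \<epsilon>\<^sup>2 / 32)"
  proof -
    have "(real n + 1) * \<epsilon>\<^sup>2 \<le> 16 * real n * \<epsilon>\<^sup>2" using assms by (intro mult_right_mono) auto
    then show ?thesis by (simp add: algebra_simps)
  qed
  ultimately show ?thesis by (rule mult_mono) auto
qed

lemma measure_density_singleton_eq_0:
  assumes "f \<in> borel_measurable borel" "\<And>x. 0 \<le> f x"
  shows "measure (density lborel (\<lambda>x. ennreal (f x))) {x} = 0"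
proof -
  have "(LINT u:{x}|lborel. f u) = 0"
    unfolding set_lebesgue_integral_def
    by (rule integral_eq_zero_AE) (use AE_lborel_singleton[of x] in \<open>auto elim!: eventually_mono\<close>)
  then show ?thesis using assms by (simp add: measure_density_eq_set_integral)
qed

lemma slice_mass_eq_measure_density:
  assumes "f \<in> borel_measurable borel" "\<And>x. 0 \<le> f x"
  shows "slice_mass f Y H c h w = measure (density lborel (\<lambda>x. ennreal (f x))) (slice Y H c h w)"
  unfolding slice_mass_def using assms
  by (subst measure_density_eq_set_integral) (auto simp: slice_def)

lemma iid_real_sample_density:
  assumes "prob_space M" "prob_space.indep_vars M (\<lambda>_. borel) Y {1..n}" "0 < n"
    and distributed: "\<forall>i\<in>{1..n}. distributed M lborel (Y i) (\<lambda>x. ennreal (f x))"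
  shows "iid_real_sample M (density lborel (\<lambda>x. ennreal (f x))) Y n"
proof (intro iid_real_sample.intro iid_real_sample_axioms.intro assms(1-3))
  fix i assume "i \<in> {1..n}"
  have "distr M borel (Y i) = distr M lborel (Y i)" by (rule distr_cong) simp_all
  also have "\<dots> = density lborel (\<lambda>x. ennreal (f x))"
    using bspec[OF distributed \<open>i \<in> {1..n}\<close>] unfolding distributed_def by (rule conjunct1)
  finally show "distr M borel (Y i) = density lborel (\<lambda>x. ennreal (f x))" .
qed

lemma prob_bad_event_le:
  assumes "f \<in> borel_measurable borel" "\<And>x. 0 \<le> f x" "prob_space M"
    and "prob_space.indep_vars M (\<lambda>_. borel) Y {1..H * c}"
    and "\<forall>i\<in>{1..H * c}. distributed M lborel (Y i) (\<lambda>x. ennreal (f x))"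
    and "2 \<le> H" "1 \<le> c" "0 < \<epsilon>"
  shows "measure M (bad_event M f Y H c \<epsilon>) \<le> 2 * real (H - 1) * exp (- real (H * c) * \<epsilon>\<^sup>2 / 2)"
proof -
  let ?D = "density lborel (\<lambda>x. ennreal (f x))"
  have "0 < H * c" using assms(6,7) by simp
  then have "iid_real_sample M ?D Y (H * c)" using assms(3-5) by (rule_tac iid_real_sample_density) auto
  then have "measure M {w\<in>space M. \<exists>h\<in>{1..H}. \<epsilon> < \<bar>measure ?D (slice Y H c h w) - 1 / H\<bar>}
      \<le> 2 * real (H - 1) * exp (- real (H * c) * \<epsilon>\<^sup>2 / 2)"
    using measure_density_singleton_eq_0[OF assms(1,2)]
    by (rule iid_real_sample.prob_slice_deviation_le) (use assms(6-8) in auto)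
  then show ?thesis
    using assms(1,2) by (simp add: bad_event_def slice_mass_eq_measure_density)
qed

theorem lemma11:
  fixes f :: "real \<Rightarrow> real"
  assumes f_nonneg: "\<And>x. 0 \<le> f x"
    and f_meas: "f \<in> borel_measurable borel"
  shows "\<exists>C>0. \<exists>H0 c0. \<forall>H c. H \<ge> H0 \<longrightarrow> c \<ge> c0 \<longrightarrow>
    (\<forall>\<epsilon>::real. \<epsilon> > 4 / (real (H * c) - 1) \<longrightarrow>
      (\<forall>(M :: 'a measure) (Y :: nat \<Rightarrow> 'a \<Rightarrow> real).
         prob_space M \<longrightarrow>
         prob_space.indep_vars M (\<lambda>_. borel) Y {1..H * c} \<longrightarrow>
         (\<forall>i\<in>{1..H * c}. distributed M lborel (Y i) (\<lambda>x. ennreal (f x))) \<longrightarrow>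
         measure M (bad_event M f Y H c \<epsilon>)
           \<le> C * (real H)^2 * sqrt (real (H * c) + 1)
               * exp (- (real (H * c) + 1) * \<epsilon>^2 / 32)))"
proof (intro exI[of _ "2::real"] conjI exI[of _ "2::nat"] allI impI)
  fix H c :: nat and \<epsilon> :: real and M :: "'a measure" and Y :: "nat \<Rightarrow> 'a \<Rightarrow> real"
  assume H: "2 \<le> H" and c: "2 \<le> c" and \<epsilon>: "4 / (real (H * c) - 1) < \<epsilon>"
    and sample: "prob_space M" "prob_space.indep_vars M (\<lambda>_. borel) Y {1..H * c}"
      "\<forall>i\<in>{1..H * c}. distributed M lborel (Y i) (\<lambda>x. ennreal (f x))"
  have "2 \<le> H * c" using mult_le_mono[OF H, of 1 c] c by simp
  \<comment> \<open>The hypothesis on \<open>\<epsilon>\<close> is only needed for \<open>\<epsilon> > 0\<close>.\<close>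
  then have "1 < real (H * c)" by linarith
  then have "0 < 4 / (real (H * c) - 1)" by simp
  with \<epsilon> have "0 < \<epsilon>" by linarith
  have "measure M (bad_event M f Y H c \<epsilon>) \<le> 2 * real (H - 1) * exp (- real (H * c) * \<epsilon>\<^sup>2 / 2)"
    using c by (intro prob_bad_event_le f_meas f_nonneg sample H \<open>0 < \<epsilon>\<close>) simp
  also have "\<dots> \<le> 2 * real H ^ 2 * sqrt (real (H * c) + 1) * exp (- (real (H * c) + 1) * \<epsilon>\<^sup>2 / 32)"
    using \<open>2 \<le> H * c\<close> by (intro union_bound_le_sqrt_bound) linarith
  finally show "measure M (bad_event M f Y H c \<epsilon>)
      \<le> 2 * (real H)^2 * sqrt (real (H * c) + 1) * exp (- (real (H * c) + 1) * \<epsilon>^2 / 32)" .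
qed simp

end
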